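(* Under the standing assumptions, suppose that $\operatorname{epi}(f-g+\delta_A)^c\cap B^*=\Lambda\cap B^*$. Then the following are equivalent: (i) stable strong duality holds for $(P)-(D^F)$; (ii) stable strong duality holds for $(P)-(\bar D^F)$ and $\Omega\cap B^*=K\cap B^*$.
   Context: Let $X$ be a nontrivial separated locally convex space with topological dual $X^*$, endowed with the topology $\sigma(X,X^* )$; $\langle x,x^*\rangle$ is the value of $x^*\in X^*$ at $x\in X$. Put $W:=X^*\times X^*\times\mathbb{R}$, $\mathbb{R}_{++}:=]0,+\infty[$ and $Z:=X^*\times X^*\times\mathbb{R}_{++}$. For $y^*\in X^*$, $\alpha\in\mathbb{R}$, let $H^-_{y^*,\alpha}:=\{x\in X:\langle x,y^*\rangle<\alpha\}$. The coupling function $c:X\times W\to\overline{\mathbb{R}}$ is $c(x,(x^*,y^*,\alpha)):=\langle x,x^*\rangle$ if $\langle x,y^*\rangle<\alpha$ and $:=+\infty$ otherwise. For $h:X\to\overline{\mathbb{R}}$ its $c$-conjugate is $h^c:W\to\overline{\mathbb{R}}$, $h^c(w):=\sup_{x\in X}\{c(x,w)-h(x)\}$, with the convention $(+\infty)+(-\infty)=(-\infty)+(+\infty)=(+\infty)-(+\infty)=(-\infty)-(-\infty)=-\infty$ (so for proper $h$, $h^c(x^*,y^*,\alpha)=h^*(x^* )$ if $\operatorname{dom}h\subseteq H^-_{y^*,\alpha}$ and $+\infty$ otherwise). Epigraphs of functions on $W$ are subsets of $W\times\mathbb{R}$. $\delta_A$ is the indicator function of $A$. For $E\subseteq W\times\mathbb{R}$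 and $e\in W\times\mathbb{R}$, $E-e:=\{z-e:z\in E\}$. Standing assumptions: $f,g:X\to\overline{\mathbb{R}}$ proper convex with $\operatorname{dom}f\subseteq\operatorname{dom}g$, $A\subseteq X$ nonempty, convention $(+\infty)-(+\infty)=+\infty$ in $f-g$. The primal $(P)$ is $\inf_{x\in A}\{f(x)-g(x)\}$. For $p^*\in X^*$: $(P_{p^*})$ is $\inf_{x\in A}\{f(x)-g(x)+\langle x,p^*\rangle\}$ with value $v(P_{p^*})$; with $\varphi_{p^*}(u^*,v^*,\gamma;x^*,y^*,\alpha):=g^c(u^*,v^*,\gamma)-f^c(u^*-x^*-p^*,-y^*,\alpha)-\delta_A^c(x^*,y^*,\alpha)$, the duals are $v(D^F_{p^*}):=\sup_{(x^*,y^*,\alpha)\in Z}\inf_{(u^*,v^*,\gamma)\in\operatorname{dom}g^c}\varphi_{p^*}$ and $v(\bar D^F_{p^*}):=\inf_{(u^*,v^*,\gamma)\in\operatorname{dom}g^c}\sup_{(x^*,y^*,\alpha)\in Z}\varphi_{p^*}$; $(D^F)$ and $(\bar D^F)$ are the cases $p^*=0$. Strong duality for $(P_{p^*})-(D^F_{p^*})$ means $v(P_{p^*})=v(D^F_{p^*})$ and there is $(\bar x^*,\bar y^*,\bar\alpha)\in\operatorname{dom}\delta_A^c$ with $\varphi_{p^*}(u^*,v^*,\gamma;\bar x^*,\bar y^*,\bar\alpha)\ge v(D^F_{p^*})$ for all $(u^*,v^*,\gamma)\in\operatorname{dom}g^c$. Strong duality for $(P_{p^*})-(\bar D^F_{p^*})$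 means $v(P_{p^*})=v(\bar D^F_{p^*})$ and for every $(u^*,v^*,\gamma)\in\operatorname{dom}g^c$ there is $(x^*,y^*,\alpha)\in\operatorname{dom}\delta_A^c$ with $\varphi_{p^*}(u^*,v^*,\gamma;x^*,y^*,\alpha)\ge v(\bar D^F_{p^*})$. Stable strong duality for $(P)-(D^F)$ (resp. $(P)-(\bar D^F)$) means strong duality for $(P_{p^*})-(D^F_{p^*})$ (resp. $(P_{p^*})-(\bar D^F_{p^*})$) for every $p^*\in X^*$. Sets: $B^*:=X^*\times\{0\}\times\mathbb{R}_{++}\times\mathbb{R}\subseteq W\times\mathbb{R}$; $\Lambda:=\bigcap_{(u^*,v^*,\gamma)\in\operatorname{dom}g^c}\Big[\operatorname{epi}(f+\delta_A)^c-\big(u^*,0,0,g^c(u^*,v^*,\gamma)\big)\Big]$; $\Omega:=\bigcup_{(x^*,y^*,\alpha)\in\operatorname{dom}\delta_A^c}\ \bigcap_{(u^*,v^*,\gamma)\in\operatorname{dom}g^c}\Big[\operatorname{epi}\big(f-c(\cdot,(-x^*,-y^*,\alpha))\big)^c-\big(u^*,0,0,g^c(u^*,v^*,\gamma)-\delta_A^c(x^*,y^*,\alpha)\big)\Big]$, $K:=\bigcap_{(u^*,v^*,\gamma)\in\operatorname{dom}g^c}\ \bigcup_{(x^*,y^*,\alpha)\in\operatorname{dom}\delta_A^c}\Big[\operatorname{epi}\big(f-c(\cdot,(-x^*,-y^*,\alpha))\big)^c-\big(u^*,0,0,g^c(u^*,v^*,\gamma)-\delta_A^c(x^*,y^*,\alpha)\big)\Big]$.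 *)

theory Defs
  imports "HOL-Analysis.Analysis"
begin

text \<open>The dual X* of the separated locally convex space X (with sigma(X,X*)) is modelled
  as a set D of linear functionals on X that is a linear subspace of the algebraic dual
  and separates the points of X.\<close>

type_synonym 'x wsp = "('x \<Rightarrow> real) \<times> ('x \<Rightarrow> real) \<times> real"

definition dual_space :: "('x::real_vector \<Rightarrow> real) set \<Rightarrow> bool" where
  "dual_space D \<longleftrightarrow> (\<forall>l\<in>D. linear l) \<and> (\<lambda>_. 0) \<in> D \<and>
     (\<forall>l\<in>D. \<forall>m\<in>D. (\<lambda>x. l x + m x) \<in> D) \<and> (\<forall>l\<in>D. \<forall>t::real. (\<lambda>x. t * l x) \<in> D) \<and>
     (\<forall>x. x \<noteq> 0 \<longrightarrow> (\<exists>l\<in>D. l x \<noteq> 0))"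

definition Wsp :: "('x \<Rightarrow> real) set \<Rightarrow> 'x wsp set" where
  "Wsp D = D \<times> D \<times> UNIV"

definition Zsp :: "('x \<Rightarrow> real) set \<Rightarrow> 'x wsp set" where
  "Zsp D = D \<times> D \<times> {0<..}"

definition cpl :: "'x \<Rightarrow> 'x wsp \<Rightarrow> ereal" where
  "cpl x w = (case w of (xs, ys, a) \<Rightarrow> if ys x < a then ereal (xs x) else \<infinity>)"

text \<open>Subtraction with the convention (+oo)-(+oo) = (-oo)-(-oo) = -oo used in c-conjugates.\<close>
definition lminus :: "ereal \<Rightarrow> ereal \<Rightarrow> ereal" where
  "lminus a b = (if (a = \<infinity> \<and> b = \<infinity>) \<or> (a = -\<infinity> \<and> b = -\<infinity>) then -\<infinity> else a - b)"

definition cconj :: "('x \<Rightarrow> ereal) \<Rightarrow> 'x wsp \<Rightarrow> ereal" where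
  "cconj h w = (SUP x. lminus (cpl x w) (h x))"

definition indf :: "'x set \<Rightarrow> 'x \<Rightarrow> ereal" where
  "indf A x = (if x \<in> A then 0 else \<infinity>)"

definition edom :: "('x \<Rightarrow> real) set \<Rightarrow> ('x wsp \<Rightarrow> ereal) \<Rightarrow> 'x wsp set" where
  "edom D F = {w \<in> Wsp D. F w < \<infinity>}"

definition epiW :: "('x \<Rightarrow> real) set \<Rightarrow> ('x wsp \<Rightarrow> ereal) \<Rightarrow> ('x wsp \<times> real) set" where
  "epiW D F = {(w, r). w \<in> Wsp D \<and> F w \<le> ereal r}"

definition shiftW :: "('x wsp \<times> real) set \<Rightarrow> 'x wsp \<times> real \<Rightarrow> ('x wsp \<times> real) set" where
  "shiftW E e = (\<lambda>z. case z of ((a, b, c), r) \<Rightarrow> case e of ((a', b', c'), r') \<Rightarrow>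
      ((a - a', b - b', c - c'), r - r')) ` E"

definition Bstar :: "('x \<Rightarrow> real) set \<Rightarrow> ('x wsp \<times> real) set" where
  "Bstar D = {((xs, ys, a), r). xs \<in> D \<and> ys = (\<lambda>_. 0) \<and> a > 0}"

definition proper_fun :: "('x \<Rightarrow> ereal) \<Rightarrow> bool" where
  "proper_fun h \<longleftrightarrow> (\<forall>x. h x \<noteq> -\<infinity>) \<and> (\<exists>x. h x \<noteq> \<infinity>)"

definition convex_fun :: "('x::real_vector \<Rightarrow> ereal) \<Rightarrow> bool" where
  "convex_fun h \<longleftrightarrow> convex {(x, r::real). h x \<le> ereal r}"

text \<open>Primal value of (P_p).  f - g uses Isabelle's ereal minus, for which (+oo)-(+oo)=+oo.\<close>
definition vP :: "('x \<Rightarrow> ereal) \<Rightarrow> ('x \<Rightarrow> ereal) \<Rightarrow> 'x set \<Rightarrow> ('x \<Rightarrow> real) \<Rightarrow> ereal" where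
  "vP f g A p = (INF x\<in>A. f x - g x + ereal (p x))"

definition phi :: "('x \<Rightarrow> ereal) \<Rightarrow> ('x \<Rightarrow> ereal) \<Rightarrow> 'x set \<Rightarrow> ('x \<Rightarrow> real) \<Rightarrow> 'x wsp \<Rightarrow> 'x wsp \<Rightarrow> ereal" where
  "phi f g A p w z = (case w of (u, v, \<gamma>) \<Rightarrow> case z of (xs, ys, a) \<Rightarrow>
      cconj g (u, v, \<gamma>) - cconj f (u - xs - p, - ys, a) - cconj (indf A) (xs, ys, a))"

definition vD :: "('x \<Rightarrow> real) set \<Rightarrow> ('x \<Rightarrow> ereal) \<Rightarrow> ('x \<Rightarrow> ereal) \<Rightarrow> 'x set \<Rightarrow> ('x \<Rightarrow> real) \<Rightarrow> ereal" where
  "vD D f g A p = (SUP z\<in>Zsp D. INF w\<in>edom D (cconj g). phi f g A p w z)"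

definition vDbar :: "('x \<Rightarrow> real) set \<Rightarrow> ('x \<Rightarrow> ereal) \<Rightarrow> ('x \<Rightarrow> ereal) \<Rightarrow> 'x set \<Rightarrow> ('x \<Rightarrow> real) \<Rightarrow> ereal" where
  "vDbar D f g A p = (INF w\<in>edom D (cconj g). SUP z\<in>Zsp D. phi f g A p w z)"

definition strong_D :: "('x \<Rightarrow> real) set \<Rightarrow> ('x \<Rightarrow> ereal) \<Rightarrow> ('x \<Rightarrow> ereal) \<Rightarrow> 'x set \<Rightarrow> ('x \<Rightarrow> real) \<Rightarrow> bool" where
  "strong_D D f g A p \<longleftrightarrow> vP f g A p = vD D f g A p \<and>
     (\<exists>z\<in>edom D (cconj (indf A)). \<forall>w\<in>edom D (cconj g). phi f g A p w z \<ge> vD D f g A p)"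

definition strong_Dbar :: "('x \<Rightarrow> real) set \<Rightarrow> ('x \<Rightarrow> ereal) \<Rightarrow> ('x \<Rightarrow> ereal) \<Rightarrow> 'x set \<Rightarrow> ('x \<Rightarrow> real) \<Rightarrow> bool" where
  "strong_Dbar D f g A p \<longleftrightarrow> vP f g A p = vDbar D f g A p \<and>
     (\<forall>w\<in>edom D (cconj g). \<exists>z\<in>edom D (cconj (indf A)). phi f g A p w z \<ge> vDbar D f g A p)"

definition stable_D where "stable_D D f g A \<longleftrightarrow> (\<forall>p\<in>D. strong_D D f g A p)"
definition stable_Dbar where "stable_Dbar D f g A \<longleftrightarrow> (\<forall>p\<in>D. strong_Dbar D f g A p)"

text \<open>The sets Lambda, Omega, K.  On dom g^c and dom delta_A^c the subtracted values are finite
  (f, g proper, A nonempty), so real_of_ereal is exact there.\<close>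
definition LambdaS :: "('x \<Rightarrow> real) set \<Rightarrow> ('x \<Rightarrow> ereal) \<Rightarrow> ('x \<Rightarrow> ereal) \<Rightarrow> 'x set \<Rightarrow> ('x wsp \<times> real) set" where
  "LambdaS D f g A = (\<Inter>w\<in>edom D (cconj g). case w of (u, v, \<gamma>) \<Rightarrow>
     shiftW (epiW D (cconj (\<lambda>x. f x + indf A x))) ((u, \<lambda>_. 0, 0), real_of_ereal (cconj g (u, v, \<gamma>))))"

definition OmegaS :: "('x \<Rightarrow> real) set \<Rightarrow> ('x \<Rightarrow> ereal) \<Rightarrow> ('x \<Rightarrow> ereal) \<Rightarrow> 'x set \<Rightarrow> ('x wsp \<times> real) set" where
  "OmegaS D f g A = (\<Union>z\<in>edom D (cconj (indf A)). \<Inter>w\<in>edom D (cconj g).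
     case z of (xs, ys, a) \<Rightarrow> case w of (u, v, \<gamma>) \<Rightarrow>
     shiftW (epiW D (cconj (\<lambda>x. f x - cpl x (- xs, - ys, a))))
       ((u, \<lambda>_. 0, 0), real_of_ereal (cconj g (u, v, \<gamma>) - cconj (indf A) (xs, ys, a))))"

definition KS :: "('x \<Rightarrow> real) set \<Rightarrow> ('x \<Rightarrow> ereal) \<Rightarrow> ('x \<Rightarrow> ereal) \<Rightarrow> 'x set \<Rightarrow> ('x wsp \<times> real) set" where
  "KS D f g A = (\<Inter>w\<in>edom D (cconj g). \<Union>z\<in>edom D (cconj (indf A)).
     case z of (xs, ys, a) \<Rightarrow> case w of (u, v, \<gamma>) \<Rightarrow>
     shiftW (epiW D (cconj (\<lambda>x. f x - cpl x (- xs, - ys, a))))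
       ((u, \<lambda>_. 0, 0), real_of_ereal (cconj g (u, v, \<gamma>) - cconj (indf A) (xs, ys, a))))"

end

theory Submission imports Defs begin

text \<open>On \<open>B* = {((x*,0,\<alpha>),r)}\<close> all sets of the statement are lower bounds in disguise:
  such a point lies in \<open>epi(f-g+\<delta>_A)^c\<close> iff \<open>-r \<le> v(P_{-x*})\<close>, and it lies in the piece of
  \<open>\<Omega>\<close> and \<open>K\<close> indexed by \<open>z \<in> dom \<delta>_A^c\<close> and \<open>w \<in> dom g^c\<close> iff \<open>-r \<le> \<phi>_{-x*}(w; z)\<close>.
  So \<open>\<Omega> \<inter> B*\<close> collects the bounds "one z serves every w" behind strong duality for \<open>(D^F)\<close>,
  and \<open>K \<inter> B*\<close> the bounds "every w has its own z" behind \<open>(D^F)\<close>-bar.  Since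
  \<open>K \<inter> B* \<subseteq> \<Lambda>\<close>, the hypothesis turns each bound of the second kind into a bound on the
  primal value; this is weak duality \<open>v(D^F) \<le> v(D^F)-bar \<le> v(P)\<close>, and both implications
  follow by comparing the two quantifier orders.\<close>

lemma lminus_simps [simp]:
  "lminus (ereal a) (ereal b) = ereal (a - b)"
  "lminus (ereal a) \<infinity> = -\<infinity>"
  "lminus (ereal a) (-\<infinity>) = \<infinity>"
  "lminus \<infinity> (ereal b) = \<infinity>"
  "lminus \<infinity> \<infinity> = -\<infinity>"
  "lminus \<infinity> (-\<infinity>) = \<infinity>"
  by (auto simp: lminus_def)

lemma lminus_ereal_le_iff:
  "d \<noteq> -\<infinity> \<Longrightarrow> lminus (ereal s) d \<le> ereal r \<longleftrightarrow> -ereal r \<le> d + ereal (-s)"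
  by (cases d) auto

lemma cpl_eq: "cpl x (a, b, c) = (if b x < c then ereal (a x) else \<infinity>)"
  by (simp add: cpl_def)

lemma cconj_upper: "lminus (cpl x w) (h x) \<le> cconj h w"
  unfolding cconj_def by (rule SUP_upper) auto

lemma cconj_le_iff: "cconj h w \<le> r \<longleftrightarrow> (\<forall>x. lminus (cpl x w) (h x) \<le> r)"
  unfolding cconj_def by (simp add: SUP_le_iff)

lemma cconj_neq_minf:
  assumes "proper_fun h" shows "cconj h w \<noteq> -\<infinity>"
proof -
  obtain x0 t where t: "h x0 = ereal t"
    using assms unfolding proper_fun_def by (metis ereal_cases)
  obtain a b c where w: "w = (a, b, c)" by (cases w) auto
  have "lminus (cpl x0 w) (h x0) \<noteq> -\<infinity>" using t by (simp add: w cpl_eq lminus_def)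
  then show ?thesis using cconj_upper[of x0 w h] by auto
qed

lemma proper_indf: "A \<noteq> {} \<Longrightarrow> proper_fun (indf A)"
  unfolding proper_fun_def indf_def by auto

lemma shiftW_mem_iff:
  "((a, b, c), r) \<in> shiftW E ((a', b', c'), r') \<longleftrightarrow>
     ((\<lambda>x. a x + a' x, \<lambda>x. b x + b' x, c + c'), r + r') \<in> E"
proof
  assume "((a, b, c), r) \<in> shiftW E ((a', b', c'), r')"
  then obtain a0 b0 c0 r0 where "((a0, b0, c0), r0) \<in> E"
      "a = a0 - a'" "b = b0 - b'" "c = c0 - c'" "r = r0 - r'"
    unfolding shiftW_def by force
  moreover have "(\<lambda>x. a x + a' x) = a0" "(\<lambda>x. b x + b' x) = b0"
    using calculation by (auto simp: fun_eq_iff)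
  ultimately show "((\<lambda>x. a x + a' x, \<lambda>x. b x + b' x, c + c'), r + r') \<in> E" by simp
next
  assume "((\<lambda>x. a x + a' x, \<lambda>x. b x + b' x, c + c'), r + r') \<in> E"
  then show "((a, b, c), r) \<in> shiftW E ((a', b', c'), r')"
    unfolding shiftW_def by (rule rev_image_eqI) (simp add: fun_eq_iff)
qed

lemma dual_space_zero: "dual_space D \<Longrightarrow> (\<lambda>_. 0) \<in> D"
  unfolding dual_space_def by auto

lemma dual_space_add: "dual_space D \<Longrightarrow> l \<in> D \<Longrightarrow> m \<in> D \<Longrightarrow> (\<lambda>x. l x + m x) \<in> D"
  unfolding dual_space_def by auto

lemma dual_space_uminus:
  assumes "dual_space D" "l \<in> D" shows "- l \<in> D"
proof -
  have "(\<lambda>x. (-1) * l x) \<in> D" using assms unfolding dual_space_def by blast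
  moreover have "(\<lambda>x. (-1) * l x) = - l" by (simp add: fun_eq_iff)
  ultimately show ?thesis by simp
qed

lemma uminus_uminus_fun [simp]: "- (- p) = (p :: 'x \<Rightarrow> real)"
  by (simp add: fun_eq_iff)

lemma Bstar_cases:
  assumes "pt \<in> Bstar D"
  obtains xs a r where "pt = ((xs, \<lambda>_. 0, a), r)" "xs \<in> D" "0 < a"
  using assms unfolding Bstar_def by auto

lemma vD_le_vDbar: "vD D f g A p \<le> vDbar D f g A p"
  unfolding vD_def vDbar_def
  by (rule SUP_least, rule INF_greatest, rule order_trans[OF INF_lower SUP_upper]) auto

locale dc_problem =
  fixes D :: "('x::real_vector \<Rightarrow> real) set" and f g :: "'x \<Rightarrow> ereal" and A :: "'x set"
  assumes dual: "dual_space D" and f_proper: "proper_fun f" and g_proper: "proper_fun g"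
    and dom_f_subset_dom_g: "\<forall>x. f x < \<infinity> \<longrightarrow> g x < \<infinity>" and A_nonempty: "A \<noteq> {}"
begin

lemma f_neq_minf: "f x \<noteq> -\<infinity>"
  using f_proper unfolding proper_fun_def by auto

lemma f_minus_g_neq_minf: "f x - g x \<noteq> -\<infinity>"
  using dom_f_subset_dom_g f_neq_minf[of x] g_proper unfolding proper_fun_def
  by (cases "f x"; cases "g x") auto

lemma cconj_f_neq_minf: "cconj f w \<noteq> -\<infinity>"
  by (rule cconj_neq_minf[OF f_proper])

lemma cconj_g_finite: "w \<in> edom D (cconj g) \<Longrightarrow> \<exists>G. cconj g w = ereal G"
  using cconj_neq_minf[OF g_proper, of w] unfolding edom_def by (cases "cconj g w") auto

lemma cconj_indf_finite: "z \<in> edom D (cconj (indf A)) \<Longrightarrow> \<exists>R. cconj (indf A) z = ereal R"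
  using cconj_neq_minf[OF proper_indf[OF A_nonempty], of z] unfolding edom_def
  by (cases "cconj (indf A) z") auto

lemma phi_less_infty:
  assumes "w \<in> edom D (cconj g)" "z \<in> edom D (cconj (indf A))"
  shows "phi f g A p w z < \<infinity>"
proof -
  obtain u v c xs ys a where wz: "w = (u, v, c)" "z = (xs, ys, a)" by (cases w, cases z) auto
  obtain G R where "cconj g w = ereal G" "cconj (indf A) z = ereal R"
    using cconj_g_finite cconj_indf_finite assms by blast
  with cconj_f_neq_minf[of "(u - xs - p, - ys, a)"] show ?thesis unfolding phi_def wz
    by (cases "cconj f (u - xs - p, - ys, a)") auto
qed

lemma phi_eq_minf_outside_dom:
  assumes "w \<in> edom D (cconj g)" "z \<in> Wsp D" "z \<notin> edom D (cconj (indf A))"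
  shows "phi f g A p w z = -\<infinity>"
proof -
  obtain u v c xs ys a where wz: "w = (u, v, c)" "z = (xs, ys, a)" by (cases w, cases z) auto
  obtain G where "cconj g w = ereal G" using cconj_g_finite assms by blast
  moreover have "cconj (indf A) z = \<infinity>" using assms(2,3) unfolding edom_def by auto
  ultimately show ?thesis using cconj_f_neq_minf[of "(u - xs - p, - ys, a)"] unfolding phi_def wz
    by (cases "cconj f (u - xs - p, - ys, a)") auto
qed

lemma epi_conj_Bstar_iff:
  assumes "xs \<in> D" "0 < a"
  shows "((xs, \<lambda>_. 0, a), r) \<in> epiW D (cconj (\<lambda>x. f x - g x + indf A x))
    \<longleftrightarrow> -ereal r \<le> vP f g A (-xs)"
proof -
  have W: "(xs, \<lambda>_. 0, a) \<in> Wsp D" using dual_space_zero[OF dual] assms by (simp add: Wsp_def)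
  have pointwise: "lminus (ereal (xs x)) (f x - g x + indf A x) \<le> ereal r
      \<longleftrightarrow> (x \<in> A \<longrightarrow> -ereal r \<le> f x - g x + ereal (- xs x))" for x
    using lminus_ereal_le_iff[OF f_minus_g_neq_minf[of x]] f_minus_g_neq_minf[of x]
    by (cases "x \<in> A") (simp_all add: indf_def)
  show ?thesis
    by (simp add: epiW_def W cconj_le_iff cpl_eq assms pointwise vP_def le_INF_iff Ball_def)
qed

lemma cconj_f_minus_cpl_eq:
  assumes "0 < a"
  shows "cconj (\<lambda>x. f x - cpl x (- xs', - ys', a')) (\<lambda>x. xs x + u x, \<lambda>_. 0, a)
    = cconj f (u - xs' - (- xs), - ys', a')"
  unfolding cconj_def
proof (rule SUP_cong[OF refl])
  fix x
  show "lminus (cpl x (\<lambda>x. xs x + u x, \<lambda>_. 0, a)) (f x - cpl x (- xs', - ys', a'))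
      = lminus (cpl x (u - xs' - - xs, - ys', a')) (f x)"
    using f_neq_minf[of x] assms by (cases "f x") (auto simp: cpl_eq lminus_def)
qed

definition OmegaK_piece :: "'x wsp \<Rightarrow> 'x wsp \<Rightarrow> ('x wsp \<times> real) set" where
  "OmegaK_piece z w = (case z of (xs', ys', a') \<Rightarrow> case w of (u, v, \<gamma>) \<Rightarrow>
     shiftW (epiW D (cconj (\<lambda>x. f x - cpl x (- xs', - ys', a'))))
       ((u, \<lambda>_. 0, 0), real_of_ereal (cconj g (u, v, \<gamma>) - cconj (indf A) (xs', ys', a'))))"

lemma OmegaK_piece_Bstar_iff:
  assumes "xs \<in> D" "0 < a" "z \<in> edom D (cconj (indf A))" "w \<in> edom D (cconj g)"
  shows "((xs, \<lambda>_. 0, a), r) \<in> OmegaK_piece z w \<longleftrightarrow> -ereal r \<le> phi f g A (-xs) w z"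
proof -
  obtain u v c xs' ys' a' where wz: "w = (u, v, c)" "z = (xs', ys', a')"
    by (cases w, cases z) auto
  obtain G R where GR: "cconj g w = ereal G" "cconj (indf A) z = ereal R"
    using cconj_g_finite cconj_indf_finite assms by blast
  have "u \<in> D" using assms(4) unfolding wz edom_def Wsp_def by auto
  then have "(\<lambda>x. xs x + u x) \<in> D" by (rule dual_space_add[OF dual assms(1)])
  then have "((xs, \<lambda>_. 0, a), r) \<in> OmegaK_piece z w
      \<longleftrightarrow> cconj f (u - xs' - (- xs), - ys', a') \<le> ereal (r + (G - R))"
    by (simp add: OmegaK_piece_def wz GR[unfolded wz] shiftW_mem_iff epiW_def Wsp_def dual_space_zero[OF dual]
        cconj_f_minus_cpl_eq[OF assms(2)])
  with GR cconj_f_neq_minf[of "(u - xs' - (- xs), - ys', a')"] show ?thesis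
    unfolding phi_def wz by (cases "cconj f (u - xs' - (- xs), - ys', a')") auto
qed

lemma OmegaS_Bstar_iff:
  assumes "xs \<in> D" "0 < a"
  shows "((xs, \<lambda>_. 0, a), r) \<in> OmegaS D f g A \<longleftrightarrow>
    (\<exists>z\<in>edom D (cconj (indf A)). \<forall>w\<in>edom D (cconj g). -ereal r \<le> phi f g A (-xs) w z)"
  unfolding OmegaS_def UN_iff INT_iff OmegaK_piece_def[symmetric]
  by (intro bex_cong ball_cong refl OmegaK_piece_Bstar_iff assms)

lemma KS_Bstar_iff:
  assumes "xs \<in> D" "0 < a"
  shows "((xs, \<lambda>_. 0, a), r) \<in> KS D f g A \<longleftrightarrow>
    (\<forall>w\<in>edom D (cconj g). \<exists>z\<in>edom D (cconj (indf A)). -ereal r \<le> phi f g A (-xs) w z)"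
  unfolding KS_def UN_iff INT_iff OmegaK_piece_def[symmetric]
  by (intro bex_cong ball_cong refl OmegaK_piece_Bstar_iff assms)

lemma OmegaS_subset_KS: "OmegaS D f g A \<subseteq> KS D f g A"
  unfolding OmegaS_def KS_def by blast


lemma LambdaS_mem_if_phi_ge:
  assumes xs: "xs \<in> D" and a: "0 < a"
    and bound: "\<forall>w\<in>edom D (cconj g). \<exists>z\<in>edom D (cconj (indf A)). -ereal r \<le> phi f g A (-xs) w z"
  shows "((xs, \<lambda>_. 0, a), r) \<in> LambdaS D f g A"
  unfolding LambdaS_def
proof (rule INT_I)
  fix w assume w_dom: "w \<in> edom D (cconj g)"
  obtain u v c where w: "w = (u, v, c)" by (cases w) auto
  obtain z where z_dom: "z \<in> edom D (cconj (indf A))" and z_bound: "-ereal r \<le> phi f g A (-xs) w z"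
    using bound w_dom by blast
  obtain xs' ys' a' where z: "z = (xs', ys', a')" by (cases z) auto
  obtain G R where G: "cconj g w = ereal G" and R: "cconj (indf A) z = ereal R"
    using cconj_g_finite cconj_indf_finite w_dom z_dom by blast
  have "u \<in> D" using w_dom unfolding w edom_def Wsp_def by auto
  then have sum_D: "(\<lambda>x. xs x + u x) \<in> D" by (rule dual_space_add[OF dual xs])
  define Fc where "Fc = cconj f (u - xs' - (- xs), - ys', a')"
  have Fc_bound: "-ereal r \<le> ereal G - Fc - ereal R"
    using z_bound G R unfolding phi_def w z Fc_def by simp
  moreover have "Fc \<noteq> -\<infinity>" unfolding Fc_def by (rule cconj_f_neq_minf)
  ultimately obtain F where F: "Fc = ereal F" by (cases Fc) auto
  \<comment> \<open>the bounds coming from \<open>\<delta>_A^c\<close> at \<open>z\<close> and from \<open>f^c\<close> add up, cancelling \<open>xs'\<close>\<close>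
  have "lminus (cpl x (\<lambda>x. xs x + u x, \<lambda>x. 0, a)) (f x + indf A x) \<le> ereal (r + G)" for x
  proof (cases "x \<in> A \<and> f x \<noteq> \<infinity>")
    case False
    have "f x + indf A x = \<infinity>" using False f_neq_minf[of x] by (auto simp: indf_def)
    then show ?thesis by (simp only: cpl_eq a if_True lminus_simps) simp
  next
    case True
    then obtain t where t: "f x = ereal t" using f_neq_minf[of x] by (cases "f x") auto
    have "lminus (cpl x z) (indf A x) \<le> ereal R" using cconj_upper[of x z "indf A"] R by simp
    then have "xs' x \<le> R"
      using True unfolding z by (auto simp: cpl_eq indf_def zero_ereal_def split: if_splits)
    moreover have "lminus (cpl x (u - xs' - (- xs), - ys', a')) (f x) \<le> ereal F"
      using cconj_upper[of x "(u - xs' - (- xs), - ys', a')" f] F unfolding Fc_def by simp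
    then have "u x - xs' x + xs x - t \<le> F" using t by (auto simp: cpl_eq split: if_splits)
    moreover have "- r \<le> G - F - R" using Fc_bound F by simp
    ultimately show ?thesis using True t a by (simp add: cpl_eq indf_def)
  qed
  then show "((xs, \<lambda>_. 0, a), r) \<in> (case w of (u, v, \<gamma>) \<Rightarrow>
     shiftW (epiW D (cconj (\<lambda>x. f x + indf A x))) ((u, \<lambda>_. 0, 0), real_of_ereal (cconj g (u, v, \<gamma>))))"
    using G unfolding w
    by (simp add: shiftW_mem_iff epiW_def Wsp_def sum_D dual_space_zero[OF dual] cconj_le_iff w)
qed

lemma KS_Bstar_subset_LambdaS: "KS D f g A \<inter> Bstar D \<subseteq> LambdaS D f g A"
proof
  fix pt assume pt: "pt \<in> KS D f g A \<inter> Bstar D"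
  then obtain xs a r where "pt = ((xs, \<lambda>_. 0, a), r)" "xs \<in> D" "0 < a"
    by (auto elim: Bstar_cases)
  with pt show "pt \<in> LambdaS D f g A"
    using KS_Bstar_iff LambdaS_mem_if_phi_ge by auto
qed

lemma unit_point_mem:
  "(\<lambda>_. 0, \<lambda>_. 0, 1) \<in> edom D (cconj (indf A))" "(\<lambda>_. 0, \<lambda>_. 0, 1) \<in> Zsp D"
proof -
  have "cconj (indf A) (\<lambda>_. 0, \<lambda>_. 0, 1) \<le> 0"
    unfolding cconj_le_iff by (auto simp: cpl_eq indf_def lminus_def zero_ereal_def)
  then show "(\<lambda>_. 0, \<lambda>_. 0, 1) \<in> edom D (cconj (indf A))"
    using dual_space_zero[OF dual] by (auto simp: edom_def Wsp_def)
  show "(\<lambda>_. 0, \<lambda>_. 0, 1) \<in> Zsp D" using dual_space_zero[OF dual] by (auto simp: Zsp_def)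
qed

lemma vD_vDbar_empty_dom:
  assumes "edom D (cconj g) = {}"
  shows "vD D f g A p = \<infinity>" "vDbar D f g A p = \<infinity>"
proof -
  have "Zsp D \<noteq> {}" using unit_point_mem(2) by blast
  then show "vD D f g A p = \<infinity>" "vDbar D f g A p = \<infinity>"
    unfolding vD_def vDbar_def assms by (simp_all add: top_ereal_def)
qed

text \<open>A feasible \<open>x\<close> lies in both half-spaces \<open>y' < \<alpha>'\<close> and \<open>-y' < \<alpha>'\<close>, so \<open>\<alpha>' > 0\<close>.\<close>

lemma Zsp_if_phi_neq_minf:
  assumes x: "x \<in> A" "f x < \<infinity>" and w_dom: "w \<in> edom D (cconj g)"
    and z_dom: "z \<in> edom D (cconj (indf A))" and finite: "phi f g A p w z \<noteq> -\<infinity>"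
  shows "z \<in> Zsp D"
proof -
  obtain u v c xs' ys' a' where wz: "w = (u, v, c)" "z = (xs', ys', a')"
    by (cases w, cases z) auto
  obtain t where t: "f x = ereal t" using x f_neq_minf[of x] by (cases "f x") auto
  obtain G R where G: "cconj g w = ereal G" and R: "cconj (indf A) z = ereal R"
    using cconj_g_finite cconj_indf_finite w_dom z_dom by blast
  have "lminus (cpl x z) (indf A x) \<le> ereal R" using cconj_upper[of x z "indf A"] R by simp
  then have "ys' x < a'"
    using x unfolding wz by (auto simp: cpl_eq indf_def zero_ereal_def split: if_splits)
  moreover have "cconj f (u - xs' - p, - ys', a') \<noteq> \<infinity>"
    using finite G R unfolding phi_def wz by auto
  then have "- ys' x < a'"
    using cconj_upper[of x "(u - xs' - p, - ys', a')" f] t by (auto simp: cpl_eq split: if_splits)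
  moreover have "xs' \<in> D" "ys' \<in> D" using z_dom unfolding wz edom_def Wsp_def by auto
  ultimately show ?thesis unfolding wz Zsp_def by auto
qed

end

locale dc_problem_regular = dc_problem +
  assumes epi_Bstar_eq_LambdaS:
    "epiW D (cconj (\<lambda>x. f x - g x + indf A x)) \<inter> Bstar D = LambdaS D f g A \<inter> Bstar D"
begin

lemma vP_ge_if_phi_ge:
  assumes p: "p \<in> D"
    and bound: "\<forall>w\<in>edom D (cconj g). \<exists>z\<in>edom D (cconj (indf A)). ereal s \<le> phi f g A p w z"
  shows "ereal s \<le> vP f g A p"
proof -
  have p': "-p \<in> D" by (rule dual_space_uminus[OF dual p])
  have "((-p, \<lambda>_. 0, 1), -s) \<in> KS D f g A \<inter> Bstar D"
    using KS_Bstar_iff[OF p', of 1 "-s"] bound p' by (simp add: Bstar_def)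
  then have "((-p, \<lambda>_. 0, 1), -s) \<in> epiW D (cconj (\<lambda>x. f x - g x + indf A x))"
    using KS_Bstar_subset_LambdaS epi_Bstar_eq_LambdaS by blast
  then show ?thesis using epi_conj_Bstar_iff[OF p', of 1 "-s"] by simp
qed

lemma vDbar_le_vP:
  assumes p: "p \<in> D" shows "vDbar D f g A p \<le> vP f g A p"
proof (rule ccontr)
  assume "\<not> ?thesis"
  then have "vP f g A p < vDbar D f g A p" by simp
  then obtain s where s: "vP f g A p < ereal s" "ereal s < vDbar D f g A p"
    using ereal_dense2 by blast
  have "\<exists>z\<in>edom D (cconj (indf A)). ereal s \<le> phi f g A p w z"
    if w_dom: "w \<in> edom D (cconj g)" for w
  proof -
    have "ereal s < (SUP z\<in>Zsp D. phi f g A p w z)"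
      using s(2) w_dom unfolding vDbar_def by (meson INF_lower less_le_trans)
    then obtain z where z: "z \<in> Zsp D" "ereal s < phi f g A p w z" by (auto simp: less_SUP_iff)
    have "z \<in> Wsp D" using z(1) by (auto simp: Zsp_def Wsp_def)
    with z(2) have "z \<in> edom D (cconj (indf A))"
      using phi_eq_minf_outside_dom[OF w_dom] by fastforce
    with z(2) show ?thesis by (auto intro: less_imp_le)
  qed
  then have "ereal s \<le> vP f g A p" by (intro vP_ge_if_phi_ge[OF p] ballI)
  with s(1) show False by simp
qed

lemma strong_Dbar_if_strong_D:
  assumes p: "p \<in> D" and strong: "strong_D D f g A p"
  shows "strong_Dbar D f g A p"
proof -
  have "vD D f g A p = vDbar D f g A p"
    using vD_le_vDbar vDbar_le_vP[OF p] strong unfolding strong_D_def by (metis antisym)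
  with strong show ?thesis unfolding strong_D_def strong_Dbar_def by metis
qed

lemma OmegaS_Bstar_eq_KS_if_stable_D:
  assumes stable: "stable_D D f g A"
  shows "OmegaS D f g A \<inter> Bstar D = KS D f g A \<inter> Bstar D"
proof
  show "OmegaS D f g A \<inter> Bstar D \<subseteq> KS D f g A \<inter> Bstar D" using OmegaS_subset_KS by blast
  show "KS D f g A \<inter> Bstar D \<subseteq> OmegaS D f g A \<inter> Bstar D"
  proof
    fix pt assume pt: "pt \<in> KS D f g A \<inter> Bstar D"
    then obtain xs a r where pt_eq: "pt = ((xs, \<lambda>_. 0, a), r)" and xs: "xs \<in> D" and a: "0 < a"
      by (auto elim: Bstar_cases)
    have xs': "-xs \<in> D" by (rule dual_space_uminus[OF dual xs])
    have "strong_D D f g A (-xs)" using stable xs' unfolding stable_D_def by blast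
    then obtain z where z_dom: "z \<in> edom D (cconj (indf A))"
      and z_bound: "\<forall>w\<in>edom D (cconj g). vD D f g A (-xs) \<le> phi f g A (-xs) w z"
      and gap: "vP f g A (-xs) = vD D f g A (-xs)"
      unfolding strong_D_def by blast
    have "-ereal r \<le> vP f g A (-xs)"
      using vP_ge_if_phi_ge[OF xs'] pt KS_Bstar_iff[OF xs a] unfolding pt_eq by auto
    with z_bound gap have "\<forall>w\<in>edom D (cconj g). -ereal r \<le> phi f g A (-xs) w z"
      by (metis order_trans)
    with z_dom have "((xs, \<lambda>_. 0, a), r) \<in> OmegaS D f g A"
      using OmegaS_Bstar_iff[OF xs a] by blast
    with pt show "pt \<in> OmegaS D f g A \<inter> Bstar D" unfolding pt_eq by blast
  qed
qed

lemma strong_D_if_strong_Dbar: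
  assumes p: "p \<in> D" and strong: "strong_Dbar D f g A p"
    and OmegaS_eq_KS: "OmegaS D f g A \<inter> Bstar D = KS D f g A \<inter> Bstar D"
  shows "strong_D D f g A p"
proof -
  have gap: "vP f g A p = vDbar D f g A p"
    and attained: "\<forall>w\<in>edom D (cconj g). \<exists>z\<in>edom D (cconj (indf A)). vDbar D f g A p \<le> phi f g A p w z"
    using strong unfolding strong_Dbar_def by auto
  have weak: "vD D f g A p \<le> vP f g A p"
    using vD_le_vDbar vDbar_le_vP[OF p] by (rule order_trans)
  show ?thesis
  proof (cases "edom D (cconj g) = {}")
    case True
    then have "vD D f g A p = \<infinity>" "vDbar D f g A p = \<infinity>" by (rule vD_vDbar_empty_dom)+
    with gap True unit_point_mem(1) show ?thesis unfolding strong_D_def by auto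
  next
    case False
    then obtain w0 where w0: "w0 \<in> edom D (cconj g)" by blast
    show ?thesis
    proof (cases "vP f g A p")
      case PInf
      obtain z where "z \<in> edom D (cconj (indf A))" "vDbar D f g A p \<le> phi f g A p w0 z"
        using attained w0 by blast
      with phi_less_infty[OF w0, of z p] gap PInf show ?thesis by simp
    next
      case MInf
      with weak have "vD D f g A p = -\<infinity>" by simp
      with MInf unit_point_mem(1) show ?thesis unfolding strong_D_def by auto
    next
      case (real v)
      have p': "-p \<in> D" by (rule dual_space_uminus[OF dual p])
      have "vDbar D f g A p = ereal v" using gap real by simp
      with attained have "((-p, \<lambda>_. 0, 1), -v) \<in> KS D f g A \<inter> Bstar D"
        using KS_Bstar_iff[OF p', of 1 "-v"] p' by (simp add: Bstar_def)
      with OmegaS_eq_KS have "((-p, \<lambda>_. 0, 1), -v) \<in> OmegaS D f g A" by blast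
      then obtain z where z_dom: "z \<in> edom D (cconj (indf A))"
        and z_bound: "\<forall>w\<in>edom D (cconj g). ereal v \<le> phi f g A p w z"
        using OmegaS_Bstar_iff[OF p', of 1 "-v"] by auto
      have "vP f g A p < \<infinity>" using real by simp
      then obtain x where x: "x \<in> A" "f x - g x + ereal (p x) < \<infinity>"
        unfolding vP_def INF_less_iff by blast
      then have "f x < \<infinity>" by (cases "f x") auto
      moreover have "phi f g A p w0 z \<noteq> -\<infinity>" using z_bound w0 by auto
      ultimately have "z \<in> Zsp D" by (rule Zsp_if_phi_neq_minf[OF x(1) _ w0 z_dom])
      then have "ereal v \<le> vD D f g A p"
        unfolding vD_def by (intro SUP_upper2 INF_greatest) (use z_bound in auto)
      with weak real have "vD D f g A p = vP f g A p" by simp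
      with real z_dom z_bound show ?thesis unfolding strong_D_def by auto
    qed
  qed
qed

end

theorem theorem6p6:
  fixes D :: "('x::real_vector \<Rightarrow> real) set"
    and f g :: "'x \<Rightarrow> ereal" and A :: "'x set"
  assumes "dual_space D" and "\<exists>x::'x. x \<noteq> 0"
    and "proper_fun f" and "convex_fun f" and "proper_fun g" and "convex_fun g"
    and "\<forall>x. f x < \<infinity> \<longrightarrow> g x < \<infinity>"
    and "A \<noteq> {}"
    and "epiW D (cconj (\<lambda>x. f x - g x + indf A x)) \<inter> Bstar D = LambdaS D f g A \<inter> Bstar D"
  shows "stable_D D f g A \<longleftrightarrow>
           (stable_Dbar D f g A \<and> OmegaS D f g A \<inter> Bstar D = KS D f g A \<inter> Bstar D)"
proof -
  interpret dc_problem_regular D f g A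
    by unfold_locales (use assms in auto)
  show ?thesis
  proof
    assume stable: "stable_D D f g A"
    then have "stable_Dbar D f g A"
      using strong_Dbar_if_strong_D unfolding stable_D_def stable_Dbar_def by blast
    with OmegaS_Bstar_eq_KS_if_stable_D[OF stable]
    show "stable_Dbar D f g A \<and> OmegaS D f g A \<inter> Bstar D = KS D f g A \<inter> Bstar D" by blast
  next
    assume "stable_Dbar D f g A \<and> OmegaS D f g A \<inter> Bstar D = KS D f g A \<inter> Bstar D"
    then show "stable_D D f g A"
      using strong_D_if_strong_Dbar unfolding stable_D_def stable_Dbar_def by blast
  qed
qed

end
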